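(* Under the standing assumptions below, let $\varepsilon\in(0,1]$ and let $0<c_1<c_2$ be constants, independent of $\varepsilon$, with $-c_2\le\partial_n\phi^\varepsilon\le-c_1$ on $\Sigma_0$ for all $\varepsilon\in(0,1]$. If a bounded $w\in C^{1,\gamma}(\Sigma_0)$ solves $\mathcal I^{1/\varepsilon}(w,y)=g(y)$ for all $y\in\Sigma_0$, then $$-\frac{1}{c_1\varepsilon}\|g\|_{L^\infty}\le w\le\frac{1}{c_1\varepsilon}\|g\|_{L^\infty}\quad\text{on }\Sigma_0.$$
   Context: Let $d\ge1$, $n\in\mathbb R^{d+1}$ a unit vector. For $r>0$, $\Sigma^r=\{y:0<y\cdot n<r\}$, $\Sigma_r=\{y:y\cdot n=r\}$, $\Sigma_0=\{y:y\cdot n=0\}$; $\partial_n=n\cdot\nabla$. Fix $\gamma\in(0,1)$, $0<\lambda\le\Lambda$. $A$ is a $\mathbb Z^{d+1}$-periodic $C^\gamma$ map into symmetric matrices with $\lambda I\le A\le\Lambda I$; $B:\mathbb R^{d+1}\to\mathbb R^{d+1}$ and $g:\mathbb R^{d+1}\to\mathbb R$ are $\mathbb Z^{d+1}$-periodic and $C^\gamma$. With $L\phi=\operatorname{Tr}(AD^2\phi)+B\cdot\nabla\phi$, let $m$ be the unique periodic positive $L^2$ function with $\int_{[0,1]^{d+1}}m=1$ and $\int m\,L\phi=0$ for all periodic $\phi\in C^2\cap L^\infty$; assume $\int_{[0,1]^{d+1}}Bm\,dy=0$. For bounded $u\in C^{1,\gamma}(\Sigma_0)$, $V^\varepsilon_u$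 is the unique bounded solution of $LV=0$ in $\Sigma^{1/\varepsilon}$, $V=0$ on $\Sigma_{1/\varepsilon}$, $V=u$ on $\Sigma_0$, and $\mathcal I^{1/\varepsilon}(u,y)=\partial_nV^\varepsilon_u(y)$ for $y\in\Sigma_0$. $\phi^\varepsilon$ is the unique bounded solution of $L\phi^\varepsilon=0$ in $\Sigma^{1/\varepsilon}$, $\phi^\varepsilon=0$ on $\Sigma_{1/\varepsilon}$, $\phi^\varepsilon=1/\varepsilon$ on $\Sigma_0$. *)

theory Defs
  imports "HOL-Analysis.Analysis"
begin

text \<open>Points of R^(d+1) are vectors of type real^'n with CARD('n) = d+1.\<close>

definition holder_cont :: "real \<Rightarrow> ('a::metric_space) set \<Rightarrow> ('a \<Rightarrow> 'b::metric_space) \<Rightarrow> bool" where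
  "holder_cont \<gamma> S f \<longleftrightarrow> (\<exists>C. \<forall>x\<in>S. \<forall>y\<in>S. dist (f x) (f y) \<le> C * dist x y powr \<gamma>)"

definition C_gamma :: "real \<Rightarrow> (real^'n \<Rightarrow> 'b::real_normed_vector) \<Rightarrow> bool" where
  "C_gamma \<gamma> f \<longleftrightarrow> bounded (range f) \<and> holder_cont \<gamma> UNIV f"

definition zperiodic :: "(real^'n \<Rightarrow> 'b) \<Rightarrow> bool" where
  "zperiodic f \<longleftrightarrow> (\<forall>y i. f (y + axis i 1) = f y)"

definition strip :: "real^'n \<Rightarrow> real \<Rightarrow> (real^'n) set" where
  "strip n r = {y. 0 < y \<bullet> n \<and> y \<bullet> n < r}"

definition closed_strip :: "real^'n \<Rightarrow> real \<Rightarrow> (real^'n) set" where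
  "closed_strip n r = {y. 0 \<le> y \<bullet> n \<and> y \<bullet> n \<le> r}"

definition hyperpl :: "real^'n \<Rightarrow> real \<Rightarrow> (real^'n) set" where
  "hyperpl n r = {y. y \<bullet> n = r}"

text \<open>L phi = Tr(A D^2 phi) + B . grad phi, given gradient G and Hessian H of phi.\<close>
definition Lop :: "(real^'n \<Rightarrow> real^'n^'n) \<Rightarrow> (real^'n \<Rightarrow> real^'n)
    \<Rightarrow> (real^'n \<Rightarrow> real^'n) \<Rightarrow> (real^'n \<Rightarrow> real^'n^'n) \<Rightarrow> real^'n \<Rightarrow> real" where
  "Lop A B G H y = (\<Sum>i\<in>UNIV. \<Sum>j\<in>UNIV. A y $ i $ j * H y $ i $ j) + B y \<bullet> G y"

definition C2_with :: "(real^'n) set \<Rightarrow> (real^'n \<Rightarrow> real) \<Rightarrow> (real^'n \<Rightarrow> real^'n)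
    \<Rightarrow> (real^'n \<Rightarrow> real^'n^'n) \<Rightarrow> bool" where
  "C2_with S V G H \<longleftrightarrow>
     (\<forall>y\<in>S. (V has_derivative (\<lambda>h. G y \<bullet> h)) (at y) \<and> (G has_derivative (\<lambda>h. H y *v h)) (at y))
     \<and> continuous_on S H"

definition L_harmonic :: "(real^'n \<Rightarrow> real^'n^'n) \<Rightarrow> (real^'n \<Rightarrow> real^'n) \<Rightarrow> (real^'n) set
    \<Rightarrow> (real^'n \<Rightarrow> real) \<Rightarrow> bool" where
  "L_harmonic A B S V \<longleftrightarrow> (\<exists>G H. C2_with S V G H \<and> (\<forall>y\<in>S. Lop A B G H y = 0))"

text \<open>V is a bounded solution of L V = 0 in Sigma^r, V = 0 on Sigma_r, V = u on Sigma_0.\<close>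
definition strip_dirichlet_sol :: "(real^'n \<Rightarrow> real^'n^'n) \<Rightarrow> (real^'n \<Rightarrow> real^'n) \<Rightarrow> real^'n
    \<Rightarrow> real \<Rightarrow> (real^'n \<Rightarrow> real) \<Rightarrow> (real^'n \<Rightarrow> real) \<Rightarrow> bool" where
  "strip_dirichlet_sol A B n r u V \<longleftrightarrow>
     L_harmonic A B (strip n r) V
     \<and> continuous_on (closed_strip n r) V
     \<and> bounded (V ` closed_strip n r)
     \<and> (\<forall>y\<in>hyperpl n r. V y = 0)
     \<and> (\<forall>y\<in>hyperpl n 0. V y = u y)"

text \<open>(One-sided, inward) normal derivative partial_n V (y) = D at a point of Sigma_0.\<close>
definition normal_deriv :: "(real^'n \<Rightarrow> real) \<Rightarrow> real^'n \<Rightarrow> real^'n \<Rightarrow> real \<Rightarrow> bool" where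
  "normal_deriv V n y D \<longleftrightarrow> ((\<lambda>t. V (y + t *\<^sub>R n)) has_real_derivative D) (at_right 0)"

definition unit_cube :: "(real^'n) set" where
  "unit_cube = cbox 0 One"

definition invariant_density :: "(real^'n \<Rightarrow> real^'n^'n) \<Rightarrow> (real^'n \<Rightarrow> real^'n)
    \<Rightarrow> (real^'n \<Rightarrow> real) \<Rightarrow> bool" where
  "invariant_density A B m \<longleftrightarrow>
     zperiodic m \<and> (\<forall>y. 0 < m y)
     \<and> m integrable_on unit_cube \<and> (\<lambda>y. (m y)\<^sup>2) integrable_on unit_cube
     \<and> integral unit_cube m = 1
     \<and> (\<forall>\<phi> G H. zperiodic \<phi> \<and> bounded (range \<phi>) \<and> C2_with UNIV \<phi> G H
          \<longrightarrow> integral unit_cube (\<lambda>y. m y * Lop A B G H y) = 0)"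

definition C1_gamma_on :: "real \<Rightarrow> (real^'n) set \<Rightarrow> (real^'n \<Rightarrow> real) \<Rightarrow> bool" where
  "C1_gamma_on \<gamma> S u \<longleftrightarrow> bounded (u ` S) \<and>
     (\<exists>G. (\<forall>y\<in>S. (u has_derivative (\<lambda>h. G y \<bullet> h)) (at y within S))
          \<and> bounded (G ` S) \<and> holder_cont \<gamma> S G)"

end

theory Submission
  imports Defs
begin

text \<open>
  The bound is a comparison argument. With \<open>M = \<parallel>g\<parallel>\<^sub>\<infinity>/(c\<^sub>1\<epsilon>) + \<theta>\<close>, the function
  \<open>Z = M\<epsilon>\<phi>\<^sup>\<epsilon> - V\<^sup>\<epsilon>\<^sub>w\<close> solves \<open>LZ = 0\<close> in the strip, vanishes on \<open>\<Sigma>\<^sub>1\<^sub>/\<^sub>\<epsilon>\<close>, equals \<open>M - w\<close> on \<open>\<Sigma>\<^sub>0\<close>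
  and has inward normal derivative \<open>M\<epsilon>\<partial>\<^sub>n\<phi>\<^sup>\<epsilon> - g \<le> -\<theta>\<epsilon>c\<^sub>1 < 0\<close> there. A minimum principle then
  gives \<open>Z \<ge> 0\<close>, i.e. \<open>w \<le> M\<close>; the lower bound follows by applying this to \<open>-w\<close>.

  The minimum principle is proved by perturbing \<open>Z\<close> with the barrier
  \<open>\<tau>(1 - exp(-a y\<cdot>n)) + \<eta>\<langle>y\<rangle>\<close>: the bracket \<open>\<langle>y\<rangle> = sqrt(1 + |y|\<^sup>2)\<close> makes the perturbed function coercive,
  so it attains its minimum on the unbounded closed strip, and for \<open>a\<close> large and \<open>\<eta>\<close> small the
  barrier is a strict supersolution. An interior minimum contradicts \<open>L(Z + barrier) < 0\<close>
  (via \<open>tr(AD\<^sup>2U) \<ge> 0\<close> at a minimum), a minimum on \<open>\<Sigma>\<^sub>0\<close> contradicts the negative normal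
  derivative, and on \<open>\<Sigma>\<^sub>1\<^sub>/\<^sub>\<epsilon>\<close> the perturbed function is nonnegative.
\<close>

section \<open>Linear algebra of positive semidefinite matrices\<close>

definition outer :: "real^'n \<Rightarrow> real^'n^'n" where
  "outer v = (\<chi> i j. v $ i * v $ j)"

lemma outer_mult_vector: "outer v *v x = (v \<bullet> x) *\<^sub>R v"
  by (simp add: outer_def vec_eq_iff matrix_vector_mult_def inner_vec_def sum_distrib_left ac_simps)

lemma rank_one_update_mult_vector:
  "(M - k *\<^sub>R outer c) *v x = M *v x - (k * (c \<bullet> x)) *\<^sub>R c"
  by (simp add: matrix_vector_mult_diff_rdistrib scaleR_matrix_vector_assoc[symmetric] outer_mult_vector)

lemma inner_outer: "outer v \<bullet> H = v \<bullet> (H *v v)"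
  by (simp add: outer_def inner_vec_def matrix_vector_mult_def sum_distrib_left ac_simps)

lemma transpose_outer: "transpose (outer v) = outer v"
  by (simp add: outer_def transpose_def vec_eq_iff mult.commute)

lemma psd_of_elliptic:
  fixes M :: "real^'n^'n"
  assumes "0 < lam" "\<forall>\<xi>. lam * (norm \<xi>)\<^sup>2 \<le> \<xi> \<bullet> (M *v \<xi>)"
  shows "\<forall>\<xi>. 0 \<le> \<xi> \<bullet> (M *v \<xi>)"
  using assms by (meson order_trans mult_nonneg_nonneg less_imp_le zero_le_power2)

lemma symmetric_inner_mult_vector:
  fixes M :: "real^'n^'n"
  assumes "transpose M = M"
  shows "x \<bullet> (M *v y) = y \<bullet> (M *v x)"
  by (metis assms dot_lmul_matrix inner_commute vector_transpose_matrix)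

lemma symmetric_quadratic_form_add:
  fixes M :: "real^'n^'n"
  assumes "transpose M = M"
  shows "(x + t *\<^sub>R v) \<bullet> (M *v (x + t *\<^sub>R v))
           = x \<bullet> (M *v x) + 2 * t * (v \<bullet> (M *v x)) + t\<^sup>2 * (v \<bullet> (M *v v))"
  using symmetric_inner_mult_vector[OF assms, of x v]
  by (simp add: algebra_simps inner_add_left inner_add_right power2_eq_square)

lemma psd_quadratic_form_zero_imp_null:
  fixes M :: "real^'n^'n"
  assumes sym: "transpose M = M" and psd: "\<forall>\<xi>. 0 \<le> \<xi> \<bullet> (M *v \<xi>)"
    and zero: "v \<bullet> (M *v v) = 0"
  shows "M *v v = 0"
proof -
  have "x \<bullet> (M *v v) = 0" for x
  proof (rule ccontr)
    assume nz: "x \<bullet> (M *v v) \<noteq> 0"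
    define t where "t = - (x \<bullet> (M *v x) + 1) / (2 * (x \<bullet> (M *v v)))"
    have "0 \<le> (x + t *\<^sub>R v) \<bullet> (M *v (x + t *\<^sub>R v))" using psd by blast
    also have "\<dots> = -1"
      using nz zero symmetric_inner_mult_vector[OF sym, of v x]
      by (simp add: symmetric_quadratic_form_add[OF sym] t_def field_simps)
    finally show False by simp
  qed
  from this[of "M *v v"] show ?thesis by simp
qed

lemma psd_pivot_pos:
  fixes M :: "real^'n^'n"
  assumes "transpose M = M" "\<forall>\<xi>. 0 \<le> \<xi> \<bullet> (M *v \<xi>)" "M *v axis j 1 \<noteq> 0"
  shows "0 < axis j 1 \<bullet> (M *v axis j 1)"
  using psd_quadratic_form_zero_imp_null[OF assms(1,2)] assms(2,3)
  by (metis order_le_less)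

lemma psd_column_elimination:
  fixes M :: "real^'n^'n" and j :: 'n
  defines "c \<equiv> M *v axis j 1"
  defines "M' \<equiv> M - (1 / (axis j 1 \<bullet> c)) *\<^sub>R outer c"
  assumes sym: "transpose M = M" and psd: "\<forall>\<xi>. 0 \<le> \<xi> \<bullet> (M *v \<xi>)" and "c \<noteq> 0"
  shows "transpose M' = M'" and "\<forall>\<xi>. 0 \<le> \<xi> \<bullet> (M' *v \<xi>)"
    and "{i. M' *v axis i 1 \<noteq> 0} \<subset> {i. M *v axis i 1 \<noteq> 0}"
proof -
  define m where "m = axis j 1 \<bullet> c"
  have m: "0 < m" using psd_pivot_pos[OF sym psd] \<open>c \<noteq> 0\<close> by (simp add: m_def c_def)
  have "transpose M' = transpose M - (1 / m) *\<^sub>R transpose (outer c)"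
    by (simp add: M'_def m_def transpose_def vec_eq_iff)
  then show "transpose M' = M'" by (simp add: M'_def m_def sym transpose_outer)
  show "\<forall>\<xi>. 0 \<le> \<xi> \<bullet> (M' *v \<xi>)"
  proof
    fix \<xi>
    have c\<xi>: "axis j 1 \<bullet> (M *v \<xi>) = c \<bullet> \<xi>"
      using symmetric_inner_mult_vector[OF sym, of "axis j 1" \<xi>] by (simp add: c_def inner_commute)
    have "\<xi> \<bullet> (M' *v \<xi>) = \<xi> \<bullet> (M *v \<xi>) - (c \<bullet> \<xi>)\<^sup>2 / m"
      by (simp add: M'_def m_def rank_one_update_mult_vector inner_diff_right power2_eq_square
          inner_commute)
    also have "\<dots> = (\<xi> + (- (c \<bullet> \<xi>) / m) *\<^sub>R axis j 1) \<bullet> (M *v (\<xi> + (- (c \<bullet> \<xi>) / m) *\<^sub>R axis j 1))"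
      unfolding symmetric_quadratic_form_add[OF sym] c\<xi> c_def[symmetric] m_def[symmetric]
      using m by (simp add: field_simps power2_eq_square)
    also have "0 \<le> \<dots>" using psd by blast
    finally show "0 \<le> \<xi> \<bullet> (M' *v \<xi>)" .
  qed
  have "c \<bullet> axis j 1 = m" by (simp add: m_def inner_commute)
  then have M'_j: "M' *v axis j 1 = 0"
    using m unfolding M'_def m_def[symmetric] rank_one_update_mult_vector c_def[symmetric] by simp
  have "M' *v axis i 1 = 0" if "M *v axis i 1 = 0" for i
  proof -
    have "c \<bullet> axis i 1 = axis j 1 \<bullet> (M *v axis i 1)"
      unfolding c_def inner_commute[of _ "axis i 1"] by (rule symmetric_inner_mult_vector[OF sym])
    also have "\<dots> = 0" using that by simp
    finally show ?thesis using that by (simp add: M'_def rank_one_update_mult_vector)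
  qed
  with M'_j \<open>c \<noteq> 0\<close> show "{i. M' *v axis i 1 \<noteq> 0} \<subset> {i. M *v axis i 1 \<noteq> 0}"
    unfolding c_def by blast
qed

lemma psd_inner_nonneg:
  fixes M H :: "real^'n^'n"
  assumes "transpose M = M" "\<forall>\<xi>. 0 \<le> \<xi> \<bullet> (M *v \<xi>)" and psd_H: "\<forall>\<xi>. 0 \<le> \<xi> \<bullet> (H *v \<xi>)"
  shows "0 \<le> M \<bullet> H"
  using assms(1,2)
proof (induction "card {i. M *v axis i 1 \<noteq> 0}" arbitrary: M rule: less_induct)
  case less
  show ?case
  proof (cases "\<exists>j. M *v axis j 1 \<noteq> 0")
    case False
    then have "M = 0" by (simp add: vec_eq_iff matrix_vector_mult_basis column_def)
    then show ?thesis by simp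
  next
    case True
    then obtain j where "M *v axis j 1 \<noteq> 0" by blast
    define c where "c = M *v axis j 1"
    define m where "m = axis j 1 \<bullet> c"
    define M' where "M' = M - (1 / m) *\<^sub>R outer c"
    have elim: "transpose M' = M'" "\<forall>\<xi>. 0 \<le> \<xi> \<bullet> (M' *v \<xi>)"
        "{i. M' *v axis i 1 \<noteq> 0} \<subset> {i. M *v axis i 1 \<noteq> 0}"
      using psd_column_elimination[OF less.prems \<open>M *v axis j 1 \<noteq> 0\<close>]
      by (simp_all add: M'_def m_def c_def)
    have "0 < m" using psd_pivot_pos[OF less.prems] \<open>M *v axis j 1 \<noteq> 0\<close> by (simp add: m_def c_def)
    have "0 \<le> M' \<bullet> H"
      using less.hyps[OF psubset_card_mono[OF _ elim(3)] elim(1,2)] by simp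
    moreover have "M \<bullet> H = M' \<bullet> H + (1 / m) * (c \<bullet> (H *v c))"
      by (simp add: M'_def inner_diff_left inner_outer)
    moreover have "0 \<le> c \<bullet> (H *v c)" using psd_H by blast
    ultimately show ?thesis using \<open>0 < m\<close> by simp
  qed
qed

section \<open>Extremum conditions\<close>

lemma has_derivative_along_line:
  fixes U :: "real^'n \<Rightarrow> real"
  assumes "(U has_derivative (\<lambda>k. G \<bullet> k)) (at (y + s *\<^sub>R v))"
  shows "((\<lambda>t. U (y + t *\<^sub>R v)) has_real_derivative (G \<bullet> v)) (at s within T)"
proof -
  have "((\<lambda>t. y + t *\<^sub>R v) has_derivative (\<lambda>t. t *\<^sub>R v)) (at s within T)"
    by (intro derivative_eq_intros) auto
  from has_derivative_compose[OF this assms]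
  show ?thesis by (simp add: has_field_derivative_def mult_commute_abs)
qed

lemma normal_deriv_nonneg_at_min:
  assumes "normal_deriv U n y D" "0 < r" "\<forall>t\<in>{0<..<r}. U y \<le> U (y + t *\<^sub>R n)"
  shows "0 \<le> D"
proof -
  have "((\<lambda>t. (U (y + t *\<^sub>R n) - U y) / t) \<longlongrightarrow> D) (at_right 0)"
    using assms(1) by (simp add: normal_deriv_def has_field_derivative_iff)
  moreover have "\<forall>\<^sub>F t in at_right 0. 0 \<le> (U (y + t *\<^sub>R n) - U y) / t"
    using eventually_at_right_real[OF assms(2)] by eventually_elim (use assms(3) in auto)
  ultimately show ?thesis by (rule tendsto_lowerbound) simp
qed

lemma second_deriv_nonneg_at_right_min:
  fixes f f' :: "real \<Rightarrow> real"
  assumes "0 < r" and f: "\<forall>t\<in>{0..r}. (f has_real_derivative f' t) (at t)"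
    and f'0: "f' 0 = 0" and f'': "(f' has_real_derivative c) (at 0)"
    and min: "\<forall>t\<in>{0..r}. f 0 \<le> f t"
  shows "0 \<le> c"
proof (rule ccontr)
  assume "\<not> 0 \<le> c"
  then obtain d where "d > 0" and d: "\<forall>h>0. h < d \<longrightarrow> f' h < 0"
    using DERIV_neg_dec_right[OF f''] f'0 by force
  define t where "t = min d r / 2"
  have t: "0 < t" "t < d" "t < r" using \<open>d > 0\<close> \<open>0 < r\<close> by (auto simp: t_def)
  have "f t < f 0"
  proof (rule DERIV_neg_imp_decreasing_open[OF \<open>0 < t\<close>])
    show "\<exists>y. (f has_real_derivative y) (at s) \<and> y < 0" if "0 < s" "s < t" for s
      using f d that t by force
    show "continuous_on {0..t} f"
      using f t by (intro DERIV_continuous_on[where D = f']) (auto intro: has_field_derivative_at_within)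
  qed
  moreover have "f 0 \<le> f t" using min t by simp
  ultimately show False by simp
qed

lemma interior_min_second_order:
  fixes U :: "real^'n \<Rightarrow> real"
  assumes S: "open S" "y \<in> S" and min: "\<forall>z\<in>S. U y \<le> U z"
    and dU: "\<forall>z\<in>S. (U has_derivative (\<lambda>k. G z \<bullet> k)) (at z)"
    and dG: "(G has_derivative (\<lambda>k. H *v k)) (at y)"
  shows "G y = 0" and "0 \<le> \<xi> \<bullet> (H *v \<xi>)"
proof -
  have "\<forall>\<^sub>F z in at y. U y \<le> U z"
    using eventually_at_in_open'[OF S] min by (auto elim: eventually_mono)
  with dU S have "(\<lambda>k. G y \<bullet> k) = (\<lambda>k. 0)"
    by (intro has_derivative_local_min) auto
  then have "G y \<bullet> G y = 0" by metis
  then show G0: "G y = 0" by simp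
  obtain e where e: "e > 0" "ball y e \<subseteq> S" using S open_contains_ball by blast
  define r where "r = e / (norm \<xi> + 1)"
  have r: "0 < r" using e by (simp add: r_def add_nonneg_pos)
  have line_in_S: "y + t *\<^sub>R \<xi> \<in> S" if "t \<in> {0..r}" for t
  proof -
    have "norm (t *\<^sub>R \<xi>) \<le> r * norm \<xi>" using that by (simp add: mult_right_mono)
    also have "\<dots> < e"
      using e by (simp add: r_def divide_less_eq add_pos_nonneg not_less)
    finally show ?thesis using e by (auto simp: dist_norm)
  qed
  have "((\<lambda>t. G (y + t *\<^sub>R \<xi>) \<bullet> \<xi>) has_real_derivative \<xi> \<bullet> (H *v \<xi>)) (at 0)"
  proof -
    have "((\<lambda>t. y + t *\<^sub>R \<xi>) has_derivative (\<lambda>t. t *\<^sub>R \<xi>)) (at 0)"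
      by (intro derivative_eq_intros) auto
    from has_derivative_compose[OF this, of G] dG
    have "((\<lambda>t. G (y + t *\<^sub>R \<xi>) \<bullet> \<xi>) has_derivative (\<lambda>t. (H *v (t *\<^sub>R \<xi>)) \<bullet> \<xi>)) (at 0)"
      by (intro derivative_eq_intros) auto
    then show ?thesis
      by (simp add: has_field_derivative_def matrix_vector_mult_scaleR inner_commute mult_commute_abs)
  qed
  then show "0 \<le> \<xi> \<bullet> (H *v \<xi>)"
    using line_in_S dU min G0
    by (intro second_deriv_nonneg_at_right_min[OF r, where f = "\<lambda>t. U (y + t *\<^sub>R \<xi>)"])
       (auto intro!: has_derivative_along_line)
qed

lemma Lop_eq_inner: "Lop A B G H y = A y \<bullet> H y + B y \<bullet> G y"
  by (simp add: Lop_def inner_vec_def)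

lemma Lop_nonneg_at_interior_min:
  assumes "open S" "y \<in> S" "\<forall>z\<in>S. U y \<le> U z"
    and "\<forall>z\<in>S. (U has_derivative (\<lambda>k. G z \<bullet> k)) (at z)"
    and "(G has_derivative (\<lambda>k. H y *v k)) (at y)"
    and "transpose (A y) = A y" "\<forall>\<xi>. 0 \<le> \<xi> \<bullet> (A y *v \<xi>)"
  shows "0 \<le> Lop A B G H y"
  using interior_min_second_order[OF assms(1-5)] psd_inner_nonneg[OF assms(6,7)]
  by (simp add: Lop_eq_inner)

lemma continuous_coercive_attains_inf:
  fixes f :: "'a::euclidean_space \<Rightarrow> real"
  assumes "closed S" "continuous_on S f" "x0 \<in> S" "0 < \<eta>" "\<forall>x\<in>S. \<eta> * norm x - C \<le> f x"
  shows "\<exists>x\<in>S. \<forall>y\<in>S. f x \<le> f y"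
proof -
  define K where "K = {x \<in> S. f x \<le> f x0}"
  have "closed K"
    unfolding K_def using assms(1,2) by (intro continuous_on_closed_Collect_le continuous_on_const)
  moreover have "bounded K"
    unfolding bounded_iff
  proof (intro exI ballI)
    fix x assume "x \<in> K"
    then have "\<eta> * norm x \<le> f x0 + C" using assms(5) by (force simp: K_def)
    then show "norm x \<le> (f x0 + C) / \<eta>" using assms(4) by (simp add: field_simps)
  qed
  ultimately obtain x where "x \<in> K" "\<forall>y\<in>K. f x \<le> f y"
    using continuous_attains_inf[of K f] continuous_on_subset[OF assms(2)] assms(3)
    by (auto simp: K_def compact_eq_bounded_closed)
  then show ?thesis unfolding K_def by force
qed

section \<open>Barrier functions\<close>

lemma inner_mat_1: "M \<bullet> mat 1 = (\<Sum>i\<in>UNIV. M $ i $ i)"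
  by (simp add: inner_vec_def mat_def if_distrib[of "(*) _"] cong: if_cong)

lemma diag_eq_quadratic_form: "M $ i $ i = axis i 1 \<bullet> (M *v axis i 1)"
  by (simp add: inner_axis' matrix_vector_mult_basis column_def)

lemma diag_le_of_quadratic_form_le:
  fixes M :: "real^'n^'n" and Lam :: real
  assumes "\<forall>\<xi>. \<xi> \<bullet> (M *v \<xi>) \<le> Lam * (norm \<xi>)\<^sup>2"
  shows "M \<bullet> mat 1 \<le> CARD('n) * Lam"
proof -
  have "M $ i $ i \<le> Lam" for i
    using assms[rule_format, of "axis i 1"] by (simp add: diag_eq_quadratic_form)
  then have "(\<Sum>i\<in>UNIV. M $ i $ i) \<le> (\<Sum>i\<in>(UNIV::'n set). Lam)" by (intro sum_mono)
  then show ?thesis by (simp add: inner_mat_1)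
qed

definition bracket :: "real^'n \<Rightarrow> real" where
  "bracket y = sqrt (1 + y \<bullet> y)"

definition bracket_grad :: "real^'n \<Rightarrow> real^'n" where
  "bracket_grad y = (1 / bracket y) *\<^sub>R y"

definition bracket_hess :: "real^'n \<Rightarrow> real^'n^'n" where
  "bracket_hess y = (1 / bracket y) *\<^sub>R mat 1 - (1 / (bracket y * (1 + y \<bullet> y))) *\<^sub>R outer y"

lemma one_le_bracket: "1 \<le> bracket y"
  by (simp add: bracket_def)

lemma norm_le_bracket: "norm y \<le> bracket y"
  by (simp add: bracket_def norm_eq_sqrt_inner)

lemma bracket_has_derivative: "(bracket has_derivative (\<lambda>k. bracket_grad y \<bullet> k)) (at y)"
proof -
  have "0 < 1 + y \<bullet> y" by (simp add: add_pos_nonneg)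
  then show ?thesis
    unfolding bracket_def[abs_def] bracket_grad_def bracket_def
    by (auto intro!: derivative_eq_intros simp: inner_commute field_simps)
qed

lemma bracket_grad_has_derivative: "(bracket_grad has_derivative (\<lambda>k. bracket_hess y *v k)) (at y)"
proof -
  have "0 < 1 + y \<bullet> y" by (simp add: add_pos_nonneg)
  then have "((\<lambda>y. (1 / sqrt (1 + y \<bullet> y)) *\<^sub>R y) has_derivative
     (\<lambda>k. (1 / sqrt (1 + y \<bullet> y)) *\<^sub>R k - ((y \<bullet> k) / (sqrt (1 + y \<bullet> y) * (1 + y \<bullet> y))) *\<^sub>R y)) (at y)"
    by (auto intro!: derivative_eq_intros simp: inner_commute field_simps)
  then show ?thesis
    unfolding bracket_grad_def[abs_def] bracket_hess_def bracket_def
    by (simp add: matrix_vector_mult_diff_rdistrib scaleR_matrix_vector_assoc[symmetric] outer_mult_vector)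
qed

lemma Lop_bracket_le:
  fixes A :: "real^'n \<Rightarrow> real^'n^'n" and Lam :: real
  assumes A: "\<forall>\<xi>. 0 \<le> \<xi> \<bullet> (A y *v \<xi>) \<and> \<xi> \<bullet> (A y *v \<xi>) \<le> Lam * (norm \<xi>)\<^sup>2"
    and B: "norm (B y) \<le> Bm"
  shows "Lop A B bracket_grad bracket_hess y \<le> CARD('n) * Lam + Bm"
proof -
  have h: "1 \<le> bracket y" by (rule one_le_bracket)
  have "A y \<bullet> bracket_hess y
      = A y \<bullet> mat 1 / bracket y - y \<bullet> (A y *v y) / (bracket y * (1 + y \<bullet> y))"
    by (simp add: bracket_hess_def inner_diff_right inner_commute[of "A y"] inner_outer)
  also have "\<dots> \<le> A y \<bullet> mat 1 / 1"
  proof -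
    have "0 \<le> A y \<bullet> mat 1"
      using A by (simp add: inner_mat_1 sum_nonneg diag_eq_quadratic_form)
    then have "A y \<bullet> mat 1 / bracket y \<le> A y \<bullet> mat 1 / 1"
      using h by (intro divide_left_mono) auto
    moreover have "0 \<le> y \<bullet> (A y *v y) / (bracket y * (1 + y \<bullet> y))"
      using A h by (simp add: add_pos_nonneg)
    ultimately show ?thesis by linarith
  qed
  also have "\<dots> \<le> CARD('n) * Lam" using A by (simp add: diag_le_of_quadratic_form_le)
  finally have "A y \<bullet> bracket_hess y \<le> CARD('n) * Lam" .
  moreover have "B y \<bullet> bracket_grad y \<le> Bm"
  proof -
    have "B y \<bullet> bracket_grad y \<le> norm (B y) * norm y / bracket y"
      using norm_cauchy_schwarz[of "B y" y] h by (simp add: bracket_grad_def divide_right_mono)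
    also have "\<dots> \<le> norm (B y)"
      using norm_le_bracket[of y] h by (simp add: divide_le_eq mult_left_mono)
    finally show ?thesis using B by linarith
  qed
  ultimately show ?thesis by (simp add: Lop_eq_inner)
qed

definition exp_barrier :: "real \<Rightarrow> real^'n \<Rightarrow> real^'n \<Rightarrow> real" where
  "exp_barrier a n y = 1 - exp (- a * (y \<bullet> n))"

definition exp_barrier_grad :: "real \<Rightarrow> real^'n \<Rightarrow> real^'n \<Rightarrow> real^'n" where
  "exp_barrier_grad a n y = (a * exp (- a * (y \<bullet> n))) *\<^sub>R n"

definition exp_barrier_hess :: "real \<Rightarrow> real^'n \<Rightarrow> real^'n \<Rightarrow> real^'n^'n" where
  "exp_barrier_hess a n y = (- (a\<^sup>2) * exp (- a * (y \<bullet> n))) *\<^sub>R outer n"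

lemma exp_barrier_has_derivative:
  "(exp_barrier a n has_derivative (\<lambda>k. exp_barrier_grad a n y \<bullet> k)) (at y)"
  unfolding exp_barrier_def[abs_def] exp_barrier_grad_def
  by (auto intro!: derivative_eq_intros simp: inner_commute field_simps)

lemma exp_barrier_grad_has_derivative:
  "(exp_barrier_grad a n has_derivative (\<lambda>k. exp_barrier_hess a n y *v k)) (at y)"
proof -
  have "((\<lambda>y. (a * exp (- a * (y \<bullet> n))) *\<^sub>R n) has_derivative
     (\<lambda>k. (- (a\<^sup>2) * exp (- a * (y \<bullet> n)) * (n \<bullet> k)) *\<^sub>R n)) (at y)"
    by (auto intro!: derivative_eq_intros simp: inner_commute power2_eq_square)
  moreover have "exp_barrier_hess a n y *v k = (- (a\<^sup>2) * exp (- a * (y \<bullet> n)) * (n \<bullet> k)) *\<^sub>R n" for k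
    unfolding exp_barrier_hess_def scaleR_matrix_vector_assoc[symmetric] outer_mult_vector by simp
  ultimately show ?thesis
    unfolding exp_barrier_grad_def[abs_def] by simp
qed

lemma Lop_exp_barrier_le:
  assumes lam: "0 < lam" and A: "\<forall>\<xi>. lam * (norm \<xi>)\<^sup>2 \<le> \<xi> \<bullet> (A y *v \<xi>)"
    and B: "norm (B y) \<le> Bm" and n: "norm n = 1" and a: "a = (Bm + 1) / lam"
  shows "Lop A B (exp_barrier_grad a n) (exp_barrier_hess a n) y \<le> - a * exp (- a * (y \<bullet> n))"
proof -
  define e where "e = exp (- a * (y \<bullet> n))"
  have "0 \<le> Bm" using B norm_ge_zero order_trans by blast
  then have "0 < a" "a * lam = Bm + 1" using a lam by simp_all
  have "A y \<bullet> exp_barrier_hess a n y = - (a\<^sup>2 * e) * (n \<bullet> (A y *v n))"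
    by (simp add: exp_barrier_hess_def inner_commute[of "A y"] inner_outer e_def)
  also have "\<dots> \<le> - (a\<^sup>2 * e) * lam"
    using A[rule_format, of n] n by (intro mult_left_mono_neg) (simp_all add: e_def)
  finally have "A y \<bullet> exp_barrier_hess a n y \<le> - (a * e) * (a * lam)"
    by (simp add: power2_eq_square algebra_simps)
  moreover have "B y \<bullet> exp_barrier_grad a n y \<le> a * e * Bm"
  proof -
    have "B y \<bullet> n \<le> Bm" using norm_cauchy_schwarz[of "B y" n] B n by simp
    then show ?thesis
      using \<open>0 < a\<close> by (simp add: exp_barrier_grad_def e_def mult_left_mono)
  qed
  moreover have "- (a * e) * (a * lam) + a * e * Bm = - (a * e)"
    using \<open>a * lam = Bm + 1\<close> by (simp add: algebra_simps)
  ultimately have "Lop A B (exp_barrier_grad a n) (exp_barrier_hess a n) y \<le> - (a * e)"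
    unfolding Lop_eq_inner by linarith
  then show ?thesis by (simp add: e_def)
qed

definition strip_barrier :: "real \<Rightarrow> real \<Rightarrow> real \<Rightarrow> real^'n \<Rightarrow> real^'n \<Rightarrow> real" where
  "strip_barrier \<tau> \<eta> a n y = \<tau> * exp_barrier a n y + \<eta> * bracket y"

definition strip_barrier_grad :: "real \<Rightarrow> real \<Rightarrow> real \<Rightarrow> real^'n \<Rightarrow> real^'n \<Rightarrow> real^'n" where
  "strip_barrier_grad \<tau> \<eta> a n y = \<tau> *\<^sub>R exp_barrier_grad a n y + \<eta> *\<^sub>R bracket_grad y"

definition strip_barrier_hess :: "real \<Rightarrow> real \<Rightarrow> real \<Rightarrow> real^'n \<Rightarrow> real^'n \<Rightarrow> real^'n^'n" where
  "strip_barrier_hess \<tau> \<eta> a n y = \<tau> *\<^sub>R exp_barrier_hess a n y + \<eta> *\<^sub>R bracket_hess y"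

lemma strip_barrier_has_derivative:
  "(strip_barrier \<tau> \<eta> a n has_derivative (\<lambda>k. strip_barrier_grad \<tau> \<eta> a n y \<bullet> k)) (at y)"
proof -
  have "((\<lambda>y. \<tau> * exp_barrier a n y + \<eta> * bracket y) has_derivative
      (\<lambda>k. \<tau> * (exp_barrier_grad a n y \<bullet> k) + \<eta> * (bracket_grad y \<bullet> k))) (at y)"
    by (intro has_derivative_add has_derivative_mult_right exp_barrier_has_derivative
        bracket_has_derivative)
  then show ?thesis
    unfolding strip_barrier_def[abs_def] strip_barrier_grad_def
    by (rule has_derivative_eq_rhs) (simp add: fun_eq_iff inner_add_left)
qed

lemma strip_barrier_grad_has_derivative:
  "(strip_barrier_grad \<tau> \<eta> a n has_derivative (\<lambda>k. strip_barrier_hess \<tau> \<eta> a n y *v k)) (at y)"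
proof -
  have "((\<lambda>y. \<tau> *\<^sub>R exp_barrier_grad a n y + \<eta> *\<^sub>R bracket_grad y) has_derivative
      (\<lambda>k. \<tau> *\<^sub>R (exp_barrier_hess a n y *v k) + \<eta> *\<^sub>R (bracket_hess y *v k))) (at y)"
    by (intro has_derivative_add has_derivative_scaleR_right exp_barrier_grad_has_derivative
        bracket_grad_has_derivative)
  then show ?thesis
    unfolding strip_barrier_grad_def[abs_def] strip_barrier_hess_def
    by (rule has_derivative_eq_rhs)
       (simp add: fun_eq_iff matrix_vector_mult_add_rdistrib scaleR_matrix_vector_assoc)
qed

lemma Lop_strip_barrier_neg:
  fixes A :: "real^'n \<Rightarrow> real^'n^'n" and Lam :: real
  assumes lam: "0 < lam"
    and A: "\<forall>\<xi>. lam * (norm \<xi>)\<^sup>2 \<le> \<xi> \<bullet> (A y *v \<xi>) \<and> \<xi> \<bullet> (A y *v \<xi>) \<le> Lam * (norm \<xi>)\<^sup>2"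
    and B: "norm (B y) \<le> Bm" and n: "norm n = 1" and a: "a = (Bm + 1) / lam"
    and \<tau>: "0 < \<tau>" and \<eta>: "0 \<le> \<eta>" and y: "y \<bullet> n \<le> r"
    and small: "\<eta> * (CARD('n) * Lam + Bm) < \<tau> * (a * exp (- a * r))"
  shows "Lop A B (strip_barrier_grad \<tau> \<eta> a n) (strip_barrier_hess \<tau> \<eta> a n) y < 0"
proof -
  have "0 \<le> Bm" using B norm_ge_zero order_trans by blast
  then have "0 < a" using a lam by simp
  have "Lop A B (strip_barrier_grad \<tau> \<eta> a n) (strip_barrier_hess \<tau> \<eta> a n) y
      = \<tau> * Lop A B (exp_barrier_grad a n) (exp_barrier_hess a n) y
        + \<eta> * Lop A B bracket_grad bracket_hess y"
    by (simp add: Lop_eq_inner strip_barrier_grad_def strip_barrier_hess_def inner_add_right algebra_simps)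
  also have "\<dots> \<le> \<tau> * (- a * exp (- a * (y \<bullet> n))) + \<eta> * (CARD('n) * Lam + Bm)"
  proof (intro add_mono mult_left_mono)
    show "Lop A B (exp_barrier_grad a n) (exp_barrier_hess a n) y \<le> - a * exp (- a * (y \<bullet> n))"
      by (rule Lop_exp_barrier_le[where lam = lam]) (use lam A B n a in auto)
    show "Lop A B bracket_grad bracket_hess y \<le> CARD('n) * Lam + Bm"
      using A B psd_of_elliptic[OF lam, of "A y"] by (intro Lop_bracket_le) auto
  qed (use \<tau> \<eta> in auto)
  also have "\<tau> * (- a * exp (- a * (y \<bullet> n))) \<le> - (\<tau> * (a * exp (- a * r)))"
    using y \<tau> \<open>0 < a\<close> by (simp add: mult_left_mono)
  finally show ?thesis using small by linarith
qed

section \<open>Minimum principle on a strip\<close>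

lemma open_strip: "open (strip n r)"
  unfolding strip_def by (intro open_Collect_conj open_Collect_less continuous_intros)

lemma closed_closed_strip: "closed (closed_strip n r)"
  unfolding closed_strip_def by (intro closed_Collect_conj closed_Collect_le continuous_intros)

lemma continuous_on_strip_barrier: "continuous_on S (strip_barrier \<tau> \<eta> a n)"
  unfolding strip_barrier_def[abs_def] exp_barrier_def bracket_def by (intro continuous_intros)

lemma exp_barrier_bounds: "0 \<le> y \<bullet> n \<Longrightarrow> 0 \<le> a \<Longrightarrow> 0 \<le> exp_barrier a n y \<and> exp_barrier a n y \<le> 1"
  by (simp add: exp_barrier_def)

lemma strip_barrier_nonneg:
  "y \<in> closed_strip n r \<Longrightarrow> 0 \<le> \<tau> \<Longrightarrow> 0 \<le> \<eta> \<Longrightarrow> 0 \<le> a \<Longrightarrow> 0 \<le> strip_barrier \<tau> \<eta> a n y"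
  using exp_barrier_bounds[of y n a] one_le_bracket[of y]
  by (simp add: strip_barrier_def closed_strip_def)

lemma normal_deriv_strip_barrier:
  assumes "y \<in> hyperpl n 0" "norm n = 1"
  shows "normal_deriv (strip_barrier \<tau> \<eta> a n) n y (\<tau> * a)"
proof -
  have "strip_barrier_grad \<tau> \<eta> a n y \<bullet> n = \<tau> * a"
    using assms by (simp add: strip_barrier_grad_def exp_barrier_grad_def bracket_grad_def
        inner_add_left hyperpl_def norm_eq_1)
  then show ?thesis
    using has_derivative_along_line[where y = y and s = 0 and v = n and T = "{0<..}",
        OF strip_barrier_has_derivative[of \<tau> \<eta> a n]]
    by (simp add: normal_deriv_def)
qed

lemma strip_perturbation_attains_min:
  assumes Z_cont: "continuous_on (closed_strip n r) Z" and Z_bdd: "bounded (Z ` closed_strip n r)"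
    and x: "x \<in> closed_strip n r" and "0 \<le> \<tau>" "0 < \<eta>" "0 \<le> a"
  obtains y where "y \<in> closed_strip n r"
    "\<forall>z\<in>closed_strip n r. Z y + strip_barrier \<tau> \<eta> a n y \<le> Z z + strip_barrier \<tau> \<eta> a n z"
proof -
  obtain C where C: "\<forall>y\<in>closed_strip n r. \<bar>Z y\<bar> \<le> C"
    using Z_bdd by (auto simp: bounded_iff)
  have "\<eta> * norm y - C \<le> Z y + strip_barrier \<tau> \<eta> a n y" if y: "y \<in> closed_strip n r" for y
  proof -
    have "- C \<le> Z y" using C y by (force simp: abs_le_iff)
    moreover have "0 \<le> \<tau> * exp_barrier a n y"
      using y exp_barrier_bounds[of y n a] assms by (simp add: closed_strip_def)
    moreover have "\<eta> * norm y \<le> \<eta> * bracket y"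
      using assms norm_le_bracket by (intro mult_left_mono) auto
    ultimately show ?thesis unfolding strip_barrier_def by linarith
  qed
  moreover have "continuous_on (closed_strip n r) (\<lambda>y. Z y + strip_barrier \<tau> \<eta> a n y)"
    by (intro continuous_on_add Z_cont continuous_on_strip_barrier)
  ultimately show ?thesis
    using continuous_coercive_attains_inf[OF closed_closed_strip _ x \<open>0 < \<eta>\<close>] that by blast
qed

lemma L_harmonic_add_no_interior_min:
  assumes "open S" and Z: "L_harmonic A B S Z"
    and P: "\<forall>z. (P has_derivative (\<lambda>k. GP z \<bullet> k)) (at z)"
    and GP: "(GP has_derivative (\<lambda>k. HP y *v k)) (at y)"
    and LP: "Lop A B GP HP y < 0"
    and A: "transpose (A y) = A y" "\<forall>\<xi>. 0 \<le> \<xi> \<bullet> (A y *v \<xi>)"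
    and min: "y \<in> S" "\<forall>z\<in>S. Z y + P y \<le> Z z + P z"
  shows False
proof -
  obtain GZ HZ where GZ: "C2_with S Z GZ HZ" and LZ: "\<forall>z\<in>S. Lop A B GZ HZ z = 0"
    using Z unfolding L_harmonic_def by blast
  have "0 \<le> Lop A B (\<lambda>z. GZ z + GP z) (\<lambda>z. HZ z + HP z) y"
  proof (rule Lop_nonneg_at_interior_min[where U = "\<lambda>z. Z z + P z" and A = A and y = y])
    show "\<forall>z\<in>S. ((\<lambda>z. Z z + P z) has_derivative (\<lambda>k. (GZ z + GP z) \<bullet> k)) (at z)"
      using GZ P unfolding C2_with_def inner_add_left by (auto intro: has_derivative_add)
    show "((\<lambda>z. GZ z + GP z) has_derivative (\<lambda>k. (HZ y + HP y) *v k)) (at y)"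
      using GZ GP min(1) unfolding C2_with_def matrix_vector_mult_add_rdistrib
      by (auto intro: has_derivative_add)
  qed (use \<open>open S\<close> min A in auto)
  also have "\<dots> = Lop A B GZ HZ y + Lop A B GP HP y"
    by (simp add: Lop_eq_inner inner_add_right)
  finally show False using LZ LP min(1) by simp
qed

lemma strip_perturbed_solution_nonneg:
  fixes A :: "real^'n \<Rightarrow> real^'n^'n" and B :: "real^'n \<Rightarrow> real^'n"
    and Z :: "real^'n \<Rightarrow> real" and Lam :: real
  assumes n: "norm n = 1" and r: "0 < r" and lam: "0 < lam"
    and A_sym: "\<forall>y. transpose (A y) = A y"
    and A_ell: "\<forall>y \<xi>. lam * (norm \<xi>)\<^sup>2 \<le> \<xi> \<bullet> (A y *v \<xi>) \<and> \<xi> \<bullet> (A y *v \<xi>) \<le> Lam * (norm \<xi>)\<^sup>2"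
    and B: "\<forall>y. norm (B y) \<le> Bm"
    and Z_sol: "L_harmonic A B (strip n r) Z"
    and Z_cont: "continuous_on (closed_strip n r) Z"
    and Z_bdd: "bounded (Z ` closed_strip n r)"
    and Z_top: "\<forall>y\<in>hyperpl n r. 0 \<le> Z y"
    and Z_bot: "\<forall>y\<in>hyperpl n 0. \<exists>D. normal_deriv Z n y D \<and> D \<le> - \<delta>"
    and a: "a = (Bm + 1) / lam" and \<tau>: "0 < \<tau>" "\<tau> * a < \<delta>" and \<eta>: "0 < \<eta>"
    and \<eta>_small: "\<eta> * (CARD('n) * Lam + Bm) < \<tau> * (a * exp (- a * r))"
    and x: "x \<in> closed_strip n r"
  shows "0 \<le> Z x + strip_barrier \<tau> \<eta> a n x"
proof -
  let ?U = "\<lambda>y. Z y + strip_barrier \<tau> \<eta> a n y"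
  have "0 \<le> Bm" using B norm_ge_zero order_trans by blast
  then have "0 < a" using a lam by simp
  obtain y where y: "y \<in> closed_strip n r" and min: "\<forall>z\<in>closed_strip n r. ?U y \<le> ?U z"
    using strip_perturbation_attains_min[OF Z_cont Z_bdd x less_imp_le[OF \<tau>(1)] \<eta> less_imp_le[OF \<open>0 < a\<close>]]
    by blast
  consider "y \<bullet> n = r" | "y \<bullet> n = 0" | "y \<in> strip n r"
    using y by (force simp: closed_strip_def strip_def)
  then have "0 \<le> ?U y"
  proof cases
    case 1
    then show ?thesis
      using Z_top strip_barrier_nonneg[OF y] \<tau> \<eta> \<open>0 < a\<close> by (simp add: hyperpl_def)
  next
    case 2
    then obtain D where D: "normal_deriv Z n y D" "D \<le> - \<delta>"
      using Z_bot by (auto simp: hyperpl_def)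
    with 2 n have "normal_deriv ?U n y (D + \<tau> * a)"
      using normal_deriv_strip_barrier[of y n] unfolding normal_deriv_def
      by (intro DERIV_add) (auto simp: hyperpl_def)
    moreover have "\<forall>t\<in>{0<..<r}. ?U y \<le> ?U (y + t *\<^sub>R n)"
      using min 2 n by (auto simp: closed_strip_def inner_add_left norm_eq_1)
    ultimately have "0 \<le> D + \<tau> * a" by (rule normal_deriv_nonneg_at_min[OF _ r])
    with D(2) \<tau>(2) show ?thesis by linarith
  next
    case 3
    have False
    proof (rule L_harmonic_add_no_interior_min[OF open_strip Z_sol])
      show "Lop A B (strip_barrier_grad \<tau> \<eta> a n) (strip_barrier_hess \<tau> \<eta> a n) y < 0"
        using A_ell B n a \<tau>(1) \<eta> \<eta>_small 3
        by (intro Lop_strip_barrier_neg[OF lam]) (auto simp: strip_def)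
      show "\<forall>\<xi>. 0 \<le> \<xi> \<bullet> (A y *v \<xi>)"
        using A_ell by (intro psd_of_elliptic[OF lam]) auto
      show "\<forall>z\<in>strip n r. ?U y \<le> ?U z"
        using min by (auto simp: strip_def closed_strip_def)
    qed (use 3 A_sym strip_barrier_has_derivative strip_barrier_grad_has_derivative in auto)
    then show ?thesis ..
  qed
  with min x show ?thesis by fastforce
qed

lemma strip_minimum_principle:
  fixes A :: "real^'n \<Rightarrow> real^'n^'n" and B :: "real^'n \<Rightarrow> real^'n"
    and Z :: "real^'n \<Rightarrow> real" and Lam :: real
  assumes n: "norm n = 1" and r: "0 < r" and lam: "0 < lam"
    and A_sym: "\<forall>y. transpose (A y) = A y"
    and A_ell: "\<forall>y \<xi>. lam * (norm \<xi>)\<^sup>2 \<le> \<xi> \<bullet> (A y *v \<xi>) \<and> \<xi> \<bullet> (A y *v \<xi>) \<le> Lam * (norm \<xi>)\<^sup>2"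
    and B: "\<forall>y. norm (B y) \<le> Bm"
    and Z_sol: "L_harmonic A B (strip n r) Z"
    and Z_cont: "continuous_on (closed_strip n r) Z"
    and Z_bdd: "bounded (Z ` closed_strip n r)"
    and Z_top: "\<forall>y\<in>hyperpl n r. 0 \<le> Z y"
    and Z_bot: "\<forall>y\<in>hyperpl n 0. \<exists>D. normal_deriv Z n y D \<and> D \<le> - \<delta>" and \<delta>: "0 < \<delta>"
    and x: "x \<in> closed_strip n r"
  shows "0 \<le> Z x"
proof (rule ccontr)
  assume "\<not> 0 \<le> Z x"
  then have \<zeta>: "0 < - Z x" by simp
  have "0 \<le> Bm" using B norm_ge_zero order_trans by blast
  define a where "a = (Bm + 1) / lam"
  have a: "0 < a" using \<open>0 \<le> Bm\<close> lam by (simp add: a_def)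
  define \<tau> where "\<tau> = min (\<delta> / (2 * a)) (- Z x / 2)"
  have \<tau>: "0 < \<tau>" "\<tau> * a < \<delta>" "\<tau> \<le> - Z x / 2"
    using \<delta> \<zeta> a by (auto simp: \<tau>_def min_def field_simps)
  define \<beta> where "\<beta> = \<tau> * (a * exp (- a * r))"
  define C where "C = \<bar>CARD('n) * Lam + Bm\<bar> + 1"
  define \<eta> where "\<eta> = min (- Z x / (4 * bracket x)) (\<beta> / (2 * C))"
  have "0 < \<beta>" "0 < C" "1 \<le> bracket x"
    using \<tau> a by (simp_all add: \<beta>_def C_def add_nonneg_pos one_le_bracket)
  then have \<eta>: "0 < \<eta>" "\<eta> * bracket x \<le> - Z x / 4" "\<eta> * C \<le> \<beta> / 2"
    using \<zeta> by (auto simp: \<eta>_def min_def field_simps)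
  have "\<eta> * (CARD('n) * Lam + Bm) \<le> \<eta> * C" using \<eta>(1) by (intro mult_left_mono) (auto simp: C_def)
  with \<eta>(3) \<open>0 < \<beta>\<close> have "\<eta> * (CARD('n) * Lam + Bm) < \<beta>" by linarith
  then have "0 \<le> Z x + strip_barrier \<tau> \<eta> a n x"
    using \<tau>(1,2) \<eta>(1) unfolding \<beta>_def
    by (intro strip_perturbed_solution_nonneg[OF n r lam A_sym A_ell B Z_sol Z_cont Z_bdd Z_top Z_bot
          a_def _ _ _ _ x])
  moreover have "\<tau> * exp_barrier a n x \<le> \<tau>"
    using x a \<tau>(1) exp_barrier_bounds[of x n a] by (intro mult_left_le) (auto simp: closed_strip_def)
  ultimately show False
    using \<eta>(2) \<tau>(3) \<zeta> unfolding strip_barrier_def by linarith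
qed

section \<open>The bound on the boundary values\<close>

lemma L_harmonic_lincomb:
  assumes "L_harmonic A B S U" "L_harmonic A B S V"
  shows "L_harmonic A B S (\<lambda>y. a * U y + b * V y)"
proof -
  obtain GU HU GV HV where U: "C2_with S U GU HU" "\<forall>y\<in>S. Lop A B GU HU y = 0"
    and V: "C2_with S V GV HV" "\<forall>y\<in>S. Lop A B GV HV y = 0"
    using assms unfolding L_harmonic_def by blast
  have "C2_with S (\<lambda>y. a * U y + b * V y) (\<lambda>y. a *\<^sub>R GU y + b *\<^sub>R GV y) (\<lambda>y. a *\<^sub>R HU y + b *\<^sub>R HV y)"
    unfolding C2_with_def
  proof (intro conjI ballI)
    fix y assume "y \<in> S"
    then show "((\<lambda>y. a * U y + b * V y) has_derivative (\<lambda>k. (a *\<^sub>R GU y + b *\<^sub>R GV y) \<bullet> k)) (at y)"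
      and "((\<lambda>y. a *\<^sub>R GU y + b *\<^sub>R GV y) has_derivative (\<lambda>k. (a *\<^sub>R HU y + b *\<^sub>R HV y) *v k)) (at y)"
      using U(1) V(1) unfolding C2_with_def inner_add_left inner_scaleR_left
        matrix_vector_mult_add_rdistrib scaleR_matrix_vector_assoc[symmetric]
      by (auto intro!: has_derivative_add has_derivative_mult_right has_derivative_scaleR_right)
  next
    show "continuous_on S (\<lambda>y. a *\<^sub>R HU y + b *\<^sub>R HV y)"
      using U(1) V(1) unfolding C2_with_def by (intro continuous_intros) auto
  qed
  moreover have "Lop A B (\<lambda>y. a *\<^sub>R GU y + b *\<^sub>R GV y) (\<lambda>y. a *\<^sub>R HU y + b *\<^sub>R HV y) y
      = a * Lop A B GU HU y + b * Lop A B GV HV y" for y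
    by (simp add: Lop_eq_inner inner_add_right algebra_simps)
  with U(2) V(2)
  have "\<forall>y\<in>S. Lop A B (\<lambda>y. a *\<^sub>R GU y + b *\<^sub>R GV y) (\<lambda>y. a *\<^sub>R HU y + b *\<^sub>R HV y) y = 0"
    by simp
  ultimately show ?thesis unfolding L_harmonic_def by blast
qed

lemma strip_dirichlet_sol_lincomb:
  assumes "strip_dirichlet_sol A B n r u U" "strip_dirichlet_sol A B n r v V"
  shows "strip_dirichlet_sol A B n r (\<lambda>y. a * u y + b * v y) (\<lambda>y. a * U y + b * V y)"
proof -
  have scale: "bounded ((\<lambda>y. c * W y) ` closed_strip n r)"
    if "bounded (W ` closed_strip n r)" for c and W :: "_ \<Rightarrow> real"
    using bounded_scaling[OF that, of c] by (simp add: image_image)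
  have "bounded ((\<lambda>y. a * U y + b * V y) ` closed_strip n r)"
    using assms unfolding strip_dirichlet_sol_def by (intro bounded_plus_comp scale) auto
  with assms show ?thesis
    unfolding strip_dirichlet_sol_def
    by (auto intro: L_harmonic_lincomb continuous_on_add continuous_on_mult_left)
qed

lemma normal_deriv_lincomb:
  assumes "normal_deriv U n y D" "normal_deriv V n y E"
  shows "normal_deriv (\<lambda>y. a * U y + b * V y) n y (a * D + b * E)"
  using assms unfolding normal_deriv_def by (intro DERIV_add DERIV_cmult)

lemma boundary_value_le_of_neumann_bound:
  fixes A :: "real^'n \<Rightarrow> real^'n^'n" and B :: "real^'n \<Rightarrow> real^'n" and Lam :: real
  assumes n: "norm n = 1" and lam: "0 < lam"
    and A_sym: "\<forall>y. transpose (A y) = A y"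
    and A_ell: "\<forall>y \<xi>. lam * (norm \<xi>)\<^sup>2 \<le> \<xi> \<bullet> (A y *v \<xi>) \<and> \<xi> \<bullet> (A y *v \<xi>) \<le> Lam * (norm \<xi>)\<^sup>2"
    and B: "\<forall>y. norm (B y) \<le> Bm"
    and \<epsilon>: "0 < \<epsilon>" and c\<^sub>1: "0 < c\<^sub>1" and K: "0 \<le> K"
    and \<phi>: "strip_dirichlet_sol A B n (1/\<epsilon>) (\<lambda>_. 1/\<epsilon>) \<phi>"
    and \<phi>_deriv: "\<forall>y\<in>hyperpl n 0. \<exists>D. normal_deriv \<phi> n y D \<and> D \<le> - c\<^sub>1"
    and V: "strip_dirichlet_sol A B n (1/\<epsilon>) w V"
    and V_deriv: "\<forall>y\<in>hyperpl n 0. normal_deriv V n y (g y)"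
    and g: "\<forall>y\<in>hyperpl n 0. - K \<le> g y"
    and y: "y \<in> hyperpl n 0"
  shows "w y \<le> K / (c\<^sub>1 * \<epsilon>)"
proof (rule field_le_epsilon)
  fix \<theta> :: real assume "0 < \<theta>"
  define M where "M = K / (c\<^sub>1 * \<epsilon>) + \<theta>"
  have "0 \<le> M" using K c\<^sub>1 \<epsilon> \<open>0 < \<theta>\<close> by (simp add: M_def)
  have M: "- (M * \<epsilon>) * c\<^sub>1 + K = - (\<theta> * \<epsilon> * c\<^sub>1)"
    using c\<^sub>1 \<epsilon> by (simp add: M_def field_simps)
  define Z where "Z z = (M * \<epsilon>) * \<phi> z + (-1) * V z" for z
  have Z: "strip_dirichlet_sol A B n (1/\<epsilon>) (\<lambda>z. (M * \<epsilon>) * (1/\<epsilon>) + (-1) * w z) Z"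
    unfolding Z_def[abs_def] by (rule strip_dirichlet_sol_lincomb[OF \<phi> V])
  have "0 \<le> Z y"
  proof (rule strip_minimum_principle[where r = "1/\<epsilon>" and x = y, OF n _ lam A_sym A_ell B])
    show "\<forall>z\<in>hyperpl n 0. \<exists>D. normal_deriv Z n z D \<and> D \<le> - (\<theta> * \<epsilon> * c\<^sub>1)"
    proof
      fix z assume z: "z \<in> hyperpl n 0"
      then obtain D where D: "normal_deriv \<phi> n z D" "D \<le> - c\<^sub>1" using \<phi>_deriv by blast
      have "normal_deriv Z n z ((M * \<epsilon>) * D + (-1) * g z)"
        unfolding Z_def[abs_def] using D(1) V_deriv z by (intro normal_deriv_lincomb) auto
      moreover have "(M * \<epsilon>) * D \<le> (M * \<epsilon>) * (- c\<^sub>1)"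
        using D(2) \<open>0 \<le> M\<close> \<epsilon> by (intro mult_left_mono) auto
      ultimately show "\<exists>D. normal_deriv Z n z D \<and> D \<le> - (\<theta> * \<epsilon> * c\<^sub>1)"
        using g z M by (intro exI[of _ "(M * \<epsilon>) * D + (-1) * g z"]) auto
    qed
  qed (use Z y \<epsilon> c\<^sub>1 \<open>0 < \<theta>\<close> in \<open>auto simp: strip_dirichlet_sol_def closed_strip_def hyperpl_def\<close>)
  moreover have "Z y = M - w y"
    using \<phi> V y \<epsilon> by (simp add: Z_def strip_dirichlet_sol_def)
  ultimately show "w y \<le> K / (c\<^sub>1 * \<epsilon>) + \<theta>" by (simp add: M_def)
qed

lemma boundary_value_abs_le_of_neumann_bound:
  fixes A :: "real^'n \<Rightarrow> real^'n^'n" and B :: "real^'n \<Rightarrow> real^'n" and Lam :: real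
  assumes n: "norm n = 1" and lam: "0 < lam"
    and A_sym: "\<forall>y. transpose (A y) = A y"
    and A_ell: "\<forall>y \<xi>. lam * (norm \<xi>)\<^sup>2 \<le> \<xi> \<bullet> (A y *v \<xi>) \<and> \<xi> \<bullet> (A y *v \<xi>) \<le> Lam * (norm \<xi>)\<^sup>2"
    and B: "\<forall>y. norm (B y) \<le> Bm"
    and \<epsilon>: "0 < \<epsilon>" and c\<^sub>1: "0 < c\<^sub>1"
    and \<phi>: "strip_dirichlet_sol A B n (1/\<epsilon>) (\<lambda>_. 1/\<epsilon>) \<phi>"
    and \<phi>_deriv: "\<forall>y\<in>hyperpl n 0. \<exists>D. normal_deriv \<phi> n y D \<and> D \<le> - c\<^sub>1"
    and V: "strip_dirichlet_sol A B n (1/\<epsilon>) w V"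
    and V_deriv: "\<forall>y\<in>hyperpl n 0. normal_deriv V n y (g y)"
    and g: "\<forall>y\<in>hyperpl n 0. \<bar>g y\<bar> \<le> K"
    and y: "y \<in> hyperpl n 0"
  shows "\<bar>w y\<bar> \<le> K / (c\<^sub>1 * \<epsilon>)"
proof -
  have "0 \<le> K" using g y by fastforce
  note bound = boundary_value_le_of_neumann_bound[OF n lam A_sym A_ell B \<epsilon> c\<^sub>1 this \<phi> \<phi>_deriv]
  have "strip_dirichlet_sol A B n (1/\<epsilon>) (\<lambda>z. - w z) (\<lambda>z. - V z)"
    using strip_dirichlet_sol_lincomb[OF V V, of "-1" 0] by simp
  moreover have "\<forall>z\<in>hyperpl n 0. normal_deriv (\<lambda>z. - V z) n z (- g z)"
    using V_deriv normal_deriv_lincomb[of V n _ _ V _ "-1" 0] by fastforce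
  ultimately have "- w y \<le> K / (c\<^sub>1 * \<epsilon>)"
    by (rule bound) (use g y in \<open>auto simp: abs_le_iff\<close>)
  moreover have "w y \<le> K / (c\<^sub>1 * \<epsilon>)"
    by (rule bound[OF V V_deriv]) (use g y in \<open>auto simp: abs_le_iff\<close>)
  ultimately show ?thesis by linarith
qed

theorem lemma5p6:
  fixes A :: "real^'n \<Rightarrow> real^'n^'n" and B :: "real^'n \<Rightarrow> real^'n"
    and g w :: "real^'n \<Rightarrow> real" and n :: "real^'n"
    and \<gamma> lam Lam \<epsilon> c\<^sub>1 c\<^sub>2 :: real
  assumes dim: "CARD('n) \<ge> 2"
    and n_unit: "norm n = 1"
    and gamma: "0 < \<gamma>" "\<gamma> < 1"
    and ell: "0 < lam" "lam \<le> Lam"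
    and A_per: "zperiodic A" and A_hol: "C_gamma \<gamma> A"
    and A_sym: "\<forall>y. transpose (A y) = A y"
    and A_ell: "\<forall>y \<xi>. lam * (norm \<xi>)\<^sup>2 \<le> \<xi> \<bullet> (A y *v \<xi>) \<and> \<xi> \<bullet> (A y *v \<xi>) \<le> Lam * (norm \<xi>)\<^sup>2"
    and B_per: "zperiodic B" and B_hol: "C_gamma \<gamma> B"
    and g_per: "zperiodic g" and g_hol: "C_gamma \<gamma> g"
    and m_ex: "\<exists>m. invariant_density A B m \<and> integral unit_cube (\<lambda>y. m y *\<^sub>R B y) = 0"
    and eps: "0 < \<epsilon>" "\<epsilon> \<le> 1"
    and c: "0 < c\<^sub>1" "c\<^sub>1 < c\<^sub>2"
    and phi_bounds: "\<forall>\<epsilon>'. 0 < \<epsilon>' \<and> \<epsilon>' \<le> 1 \<longrightarrow>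
        (\<exists>\<phi>. strip_dirichlet_sol A B n (1/\<epsilon>') (\<lambda>_. 1/\<epsilon>') \<phi>
             \<and> (\<forall>y\<in>hyperpl n 0. \<exists>D. normal_deriv \<phi> n y D \<and> -c\<^sub>2 \<le> D \<and> D \<le> -c\<^sub>1))"
    and w_reg: "C1_gamma_on \<gamma> (hyperpl n 0) w"
    and w_sol: "\<exists>V. strip_dirichlet_sol A B n (1/\<epsilon>) w V
        \<and> (\<forall>y\<in>hyperpl n 0. normal_deriv V n y (g y))"
  shows "\<forall>y\<in>hyperpl n 0.
     - (1 / (c\<^sub>1 * \<epsilon>)) * (SUP z. \<bar>g z\<bar>) \<le> w y \<and> w y \<le> (1 / (c\<^sub>1 * \<epsilon>)) * (SUP z. \<bar>g z\<bar>)"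
  \<comment> \<open>Only ellipticity, boundedness of \<open>B\<close> and \<open>g\<close>, and \<open>\<partial>\<^sub>n\<phi>\<^sup>\<epsilon> \<le> -c\<^sub>1\<close> are used.\<close>
proof
  fix y assume y: "y \<in> hyperpl n 0"
  obtain Bm where Bm: "\<forall>z. norm (B z) \<le> Bm"
    using B_hol unfolding C_gamma_def bounded_iff by auto
  have "bdd_above (range (\<lambda>z. \<bar>g z\<bar>))"
    using g_hol unfolding C_gamma_def bounded_iff bdd_above_def by auto
  then have g: "\<forall>z\<in>hyperpl n 0. \<bar>g z\<bar> \<le> (SUP z. \<bar>g z\<bar>)" by (auto intro: cSUP_upper)
  obtain \<phi> where \<phi>: "strip_dirichlet_sol A B n (1/\<epsilon>) (\<lambda>_. 1/\<epsilon>) \<phi>"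
      "\<forall>y\<in>hyperpl n 0. \<exists>D. normal_deriv \<phi> n y D \<and> D \<le> - c\<^sub>1"
    using phi_bounds eps by blast
  obtain V where V: "strip_dirichlet_sol A B n (1/\<epsilon>) w V" "\<forall>y\<in>hyperpl n 0. normal_deriv V n y (g y)"
    using w_sol by blast
  have "\<bar>w y\<bar> \<le> (SUP z. \<bar>g z\<bar>) / (c\<^sub>1 * \<epsilon>)"
    by (rule boundary_value_abs_le_of_neumann_bound[OF n_unit ell(1) A_sym A_ell Bm eps(1) c(1) \<phi> V g y])
  then show "- (1 / (c\<^sub>1 * \<epsilon>)) * (SUP z. \<bar>g z\<bar>) \<le> w y \<and> w y \<le> (1 / (c\<^sub>1 * \<epsilon>)) * (SUP z. \<bar>g z\<bar>)"
    by (simp add: abs_le_iff)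
qed

end
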